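(* Let $\Gamma=(G,\sigma)$, $G=(V,E)$, be a signed graph and $f:V\to\mathbb R$ a function not identically zero, with weak nodal domains $D_1,\dots,D_q$. Let $G_D$ be the graph with vertex set $\{D_1,\dots,D_q\}$ and edges $\{D_i,D_j\}$ whenever $D_i\sim D_j$, i.e. there exist $x\in D_i$ and $y\in D_j$ with $x\sim y$. If $G$ is connected, then $G_D$ is connected.
   Context: A signed graph is a finite simple undirected graph $G=(V,E)$ with $\sigma:E\to\{+1,-1\}$. A walk is $y_1,\dots,y_m$ ($m\ge2$) with consecutive vertices adjacent. For $f:V\to\mathbb R$, a W-walk of $f$ is a walk such that for any two consecutive nonzeros $y_i,y_j$ along it ($i<j$, $f(y_i)\ne0\ne f(y_j)$, $f(y_l)=0$ for $i<l<j$) one has $f(y_i)\sigma_{y_iy_{i+1}}\cdots\sigma_{y_{j-1}y_j}f(y_j)>0$. On $\Omega=\{x:f(x)\ne0\}$ the relation "$x=y$ or a W-walk connects $x$ and $y$" is an equivalence relation with classes $W_1,\dots,W_q$; the weak nodal domains of $f$ are the induced subgraphs on $W_i^0=W_i\cup\{x\in V:\text{there is a W-walk from } x \text{ to some vertex of } W_i\}$. *)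

theory Defs
  imports Complex_Main
begin

definition signed_graph :: "'a set \<Rightarrow> 'a set set \<Rightarrow> ('a set \<Rightarrow> real) \<Rightarrow> bool" where
  "signed_graph V E \<sigma> \<longleftrightarrow> finite V \<and>
     (\<forall>e\<in>E. \<exists>x y. x \<noteq> y \<and> x \<in> V \<and> y \<in> V \<and> e = {x, y}) \<and>
     (\<forall>e\<in>E. \<sigma> e = 1 \<or> \<sigma> e = -1)"

definition is_walk :: "'a set set \<Rightarrow> 'a list \<Rightarrow> bool" where
  "is_walk E ys \<longleftrightarrow> 2 \<le> length ys \<and>
     (\<forall>i. Suc i < length ys \<longrightarrow> {ys ! i, ys ! Suc i} \<in> E)"

definition walk_sign :: "('a set \<Rightarrow> real) \<Rightarrow> 'a list \<Rightarrow> nat \<Rightarrow> nat \<Rightarrow> real" where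
  "walk_sign \<sigma> ys i j = (\<Prod>l\<in>{i..<j}. \<sigma> {ys ! l, ys ! Suc l})"

definition is_W_walk :: "'a set set \<Rightarrow> ('a set \<Rightarrow> real) \<Rightarrow> ('a \<Rightarrow> real) \<Rightarrow> 'a list \<Rightarrow> bool" where
  "is_W_walk E \<sigma> f ys \<longleftrightarrow> is_walk E ys \<and>
     (\<forall>i j. i < j \<and> j < length ys \<and> f (ys ! i) \<noteq> 0 \<and> f (ys ! j) \<noteq> 0 \<and>
        (\<forall>l. i < l \<and> l < j \<longrightarrow> f (ys ! l) = 0) \<longrightarrow>
        f (ys ! i) * walk_sign \<sigma> ys i j * f (ys ! j) > 0)"

definition W_connects :: "'a set set \<Rightarrow> ('a set \<Rightarrow> real) \<Rightarrow> ('a \<Rightarrow> real) \<Rightarrow> 'a \<Rightarrow> 'a \<Rightarrow> bool" where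
  "W_connects E \<sigma> f x y \<longleftrightarrow> (\<exists>ys. is_W_walk E \<sigma> f ys \<and>
     ((hd ys = x \<and> last ys = y) \<or> (hd ys = y \<and> last ys = x)))"

definition nonzero_set :: "'a set \<Rightarrow> ('a \<Rightarrow> real) \<Rightarrow> 'a set" where
  "nonzero_set V f = {x\<in>V. f x \<noteq> 0}"

definition W_rel :: "'a set \<Rightarrow> 'a set set \<Rightarrow> ('a set \<Rightarrow> real) \<Rightarrow> ('a \<Rightarrow> real) \<Rightarrow> ('a \<times> 'a) set" where
  "W_rel V E \<sigma> f = {(x, y). x \<in> nonzero_set V f \<and> y \<in> nonzero_set V f \<and>
      (x = y \<or> W_connects E \<sigma> f x y)}"

definition W_classes :: "'a set \<Rightarrow> 'a set set \<Rightarrow> ('a set \<Rightarrow> real) \<Rightarrow> ('a \<Rightarrow> real) \<Rightarrow> 'a set set" where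
  "W_classes V E \<sigma> f = nonzero_set V f // W_rel V E \<sigma> f"

definition domain_of :: "'a set \<Rightarrow> 'a set set \<Rightarrow> ('a set \<Rightarrow> real) \<Rightarrow> ('a \<Rightarrow> real) \<Rightarrow> 'a set \<Rightarrow> 'a set" where
  "domain_of V E \<sigma> f W = W \<union> {x\<in>V. \<exists>ys. is_W_walk E \<sigma> f ys \<and> hd ys = x \<and> last ys \<in> W}"

text \<open>Adjacency of weak nodal domains D_i ~ D_j (indexed by the classes, i \<noteq> j).\<close>
definition domain_adj :: "'a set \<Rightarrow> 'a set set \<Rightarrow> ('a set \<Rightarrow> real) \<Rightarrow> ('a \<Rightarrow> real) \<Rightarrow> ('a set \<times> 'a set) set" where
  "domain_adj V E \<sigma> f = {(A, B). A \<in> W_classes V E \<sigma> f \<and> B \<in> W_classes V E \<sigma> f \<and> A \<noteq> B \<and>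
      (\<exists>x\<in>domain_of V E \<sigma> f A. \<exists>y\<in>domain_of V E \<sigma> f B. {x, y} \<in> E)}"

definition domain_graph_connected :: "'a set \<Rightarrow> 'a set set \<Rightarrow> ('a set \<Rightarrow> real) \<Rightarrow> ('a \<Rightarrow> real) \<Rightarrow> bool" where
  "domain_graph_connected V E \<sigma> f \<longleftrightarrow>
     (\<forall>A\<in>W_classes V E \<sigma> f. \<forall>B\<in>W_classes V E \<sigma> f. (A, B) \<in> (domain_adj V E \<sigma> f)\<^sup>*)"

definition graph_connected :: "'a set \<Rightarrow> 'a set set \<Rightarrow> bool" where
  "graph_connected V E \<longleftrightarrow>
     (\<forall>x\<in>V. \<forall>y\<in>V. x = y \<or> (\<exists>ys. is_walk E ys \<and> hd ys = x \<and> last ys = y))"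

end

theory Submission
  imports Defs
begin

text \<open>Every vertex lies in some weak nodal domain: a zero vertex is joined to a nonzero one by a
  walk of G, and the initial segment of that walk up to its first nonzero vertex is a W-walk,
  the sign condition being vacuous on it. Domains containing adjacent vertices are equal or
  adjacent in G_D, so following a walk of G between representatives of two classes, vertex by
  vertex, connects the two classes in G_D.\<close>

lemma edge_subset_vertices:
  assumes "signed_graph V E \<sigma>" "{x, y} \<in> E"
  shows "x \<in> V" "y \<in> V"
  using assms unfolding signed_graph_def by (auto simp: doubleton_eq_iff)

lemma is_walk_Cons_Cons:
  "is_walk E (x # y # zs) \<longleftrightarrow> {x, y} \<in> E \<and> (zs = [] \<or> is_walk E (y # zs))"
  unfolding is_walk_def by (auto simp: nth_Cons Suc_le_eq split: nat.split)

lemma set_walk_subset: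
  assumes "signed_graph V E \<sigma>" "is_walk E ys"
  shows "set ys \<subseteq> V"
  using assms(2)
proof (induction ys rule: induct_list012)
  case (3 x y zs)
  then show ?case
    using edge_subset_vertices[OF assms(1)] by (auto simp: is_walk_Cons_Cons)
qed (auto simp: is_walk_def)

lemma is_walk_take:
  assumes "is_walk E ys" "2 \<le> n" "n \<le> length ys"
  shows "is_walk E (take n ys)"
  using assms unfolding is_walk_def by auto

lemma is_W_walk_if_zero_before_last:
  assumes "is_walk E ys" "\<forall>i < length ys - 1. f (ys ! i) = 0"
  shows "is_W_walk E \<sigma> f ys"
proof -
  have "\<not> (i < j \<and> j < length ys \<and> f (ys ! i) \<noteq> 0)" for i j
    using assms(2) by auto
  then show ?thesis
    using assms(1) unfolding is_W_walk_def by blast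
qed

lemma W_walk_to_first_nonzero:
  assumes "is_walk E ys" "f (hd ys) = 0" "f (last ys) \<noteq> 0"
  obtains zs where "is_W_walk E \<sigma> f zs" "hd zs = hd ys" "last zs \<in> set ys" "f (last zs) \<noteq> 0"
proof -
  have ne: "ys \<noteq> []"
    using assms(1) unfolding is_walk_def by auto
  have "\<exists>k. k < length ys \<and> f (ys ! k) \<noteq> 0"
    using assms(3) ne by (intro exI[of _ "length ys - 1"]) (simp add: last_conv_nth)
  then obtain k where k: "k < length ys" "f (ys ! k) \<noteq> 0" and first: "\<forall>i < k. f (ys ! i) = 0"
    by (subst (asm) exists_least_iff) auto
  have "k \<noteq> 0"
    using k(2) assms(2) ne hd_conv_nth by metis
  define zs where "zs = take (Suc k) ys"
  have "is_walk E zs"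
    unfolding zs_def using assms(1) k(1) \<open>k \<noteq> 0\<close> by (intro is_walk_take) auto
  moreover have "\<forall>i < length zs - 1. f (zs ! i) = 0"
    using first k(1) by (simp add: zs_def)
  ultimately have "is_W_walk E \<sigma> f zs"
    by (rule is_W_walk_if_zero_before_last)
  moreover have "hd zs = hd ys" "last zs = ys ! k"
    using ne k(1) by (simp_all add: zs_def hd_take last_conv_nth)
  ultimately show thesis
    using that k by auto
qed

lemma W_classI:
  assumes "a \<in> nonzero_set V f"
  shows "W_rel V E \<sigma> f `` {a} \<in> W_classes V E \<sigma> f" "a \<in> W_rel V E \<sigma> f `` {a}"
proof -
  show "W_rel V E \<sigma> f `` {a} \<in> W_classes V E \<sigma> f"
    unfolding W_classes_def using assms by (rule quotientI)
  show "a \<in> W_rel V E \<sigma> f `` {a}"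
    using assms by (simp add: W_rel_def)
qed

lemma W_classE:
  assumes "C \<in> W_classes V E \<sigma> f"
  obtains a where "a \<in> nonzero_set V f" "C = W_rel V E \<sigma> f `` {a}"
  using assms unfolding W_classes_def by (rule quotientE)

lemma subset_domain_of: "W \<subseteq> domain_of V E \<sigma> f W"
  unfolding domain_of_def by blast

lemma vertex_in_domain:
  assumes "signed_graph V E \<sigma>" "\<exists>x\<in>V. f x \<noteq> 0" "graph_connected V E" "v \<in> V"
  obtains C where "C \<in> W_classes V E \<sigma> f" "v \<in> domain_of V E \<sigma> f C"
proof (cases "f v = 0")
  case False
  then have "v \<in> nonzero_set V f"
    using assms(4) by (simp add: nonzero_set_def)
  then show thesis
    using that W_classI subset_domain_of by (meson subsetD)
next
  case True
  obtain x where x: "x \<in> V" "f x \<noteq> 0"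
    using assms(2) by blast
  moreover have "v \<noteq> x"
    using True x(2) by auto
  ultimately obtain ys where ys: "is_walk E ys" "hd ys = v" "last ys = x"
    using assms(3,4) unfolding graph_connected_def by blast
  have "f (hd ys) = 0" "f (last ys) \<noteq> 0"
    using ys True x(2) by simp_all
  then obtain zs
    where zs: "is_W_walk E \<sigma> f zs" "hd zs = hd ys" "last zs \<in> set ys" "f (last zs) \<noteq> 0"
    by (rule W_walk_to_first_nonzero[OF ys(1)])
  then have "last zs \<in> nonzero_set V f"
    using set_walk_subset[OF assms(1) ys(1)] by (auto simp: nonzero_set_def)
  note last_class = W_classI[OF this, of E \<sigma>]
  show thesis
  proof (rule that[OF last_class(1)])
    show "v \<in> domain_of V E \<sigma> f (W_rel V E \<sigma> f `` {last zs})"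
      unfolding domain_of_def using assms(4) zs(1,2) ys(2) last_class(2) by blast
  qed
qed

lemma domain_adj_rtrancl_if_edge:
  assumes "C \<in> W_classes V E \<sigma> f" "D \<in> W_classes V E \<sigma> f"
    and "x \<in> domain_of V E \<sigma> f C" "y \<in> domain_of V E \<sigma> f D" "{x, y} \<in> E"
  shows "(C, D) \<in> (domain_adj V E \<sigma> f)\<^sup>*"
proof (cases "C = D")
  case False
  then have "(C, D) \<in> domain_adj V E \<sigma> f"
    using assms unfolding domain_adj_def by blast
  then show ?thesis by blast
qed simp

lemma domain_adj_rtrancl_along_walk:
  assumes G: "signed_graph V E \<sigma>" "\<exists>x\<in>V. f x \<noteq> 0" "graph_connected V E"
    and "is_walk E ys" "C \<in> W_classes V E \<sigma> f" "D \<in> W_classes V E \<sigma> f"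
    and "hd ys \<in> domain_of V E \<sigma> f C" "last ys \<in> domain_of V E \<sigma> f D"
  shows "(C, D) \<in> (domain_adj V E \<sigma> f)\<^sup>*"
  using assms(4-)
proof (induction ys arbitrary: C rule: induct_list012)
  case (3 x y zs)
  have xy: "{x, y} \<in> E" and zs: "zs = [] \<or> is_walk E (y # zs)"
    using "3.prems"(1) by (simp_all add: is_walk_Cons_Cons)
  show ?case
  proof (cases "zs = []")
    case True
    then show ?thesis
      using domain_adj_rtrancl_if_edge[OF "3.prems"(2,3) _ _ xy] "3.prems"(4,5) by simp
  next
    case False
    obtain B where B: "B \<in> W_classes V E \<sigma> f" "y \<in> domain_of V E \<sigma> f B"
      using vertex_in_domain[OF G edge_subset_vertices(2)[OF G(1) xy]] by blast
    have "(C, B) \<in> (domain_adj V E \<sigma> f)\<^sup>*"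
      using domain_adj_rtrancl_if_edge[OF "3.prems"(2) B(1) _ B(2) xy] "3.prems"(4) by simp
    also have "(B, D) \<in> (domain_adj V E \<sigma> f)\<^sup>*"
      using "3.IH"(2)[OF _ B(1) "3.prems"(3)] B(2) "3.prems"(5) zs False by simp
    finally show ?thesis .
  qed
qed (auto simp: is_walk_def)

theorem proposition3p7:
  fixes V :: "'a set" and E :: "'a set set" and \<sigma> :: "'a set \<Rightarrow> real" and f :: "'a \<Rightarrow> real"
  assumes "signed_graph V E \<sigma>"
    and "\<exists>x\<in>V. f x \<noteq> 0"
    and "graph_connected V E"
  shows "domain_graph_connected V E \<sigma> f"
  unfolding domain_graph_connected_def
proof (intro ballI)
  fix A B
  assume A: "A \<in> W_classes V E \<sigma> f" and B: "B \<in> W_classes V E \<sigma> f"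
  obtain a where a: "a \<in> nonzero_set V f" "A = W_rel V E \<sigma> f `` {a}"
    using A by (rule W_classE)
  obtain b where b: "b \<in> nonzero_set V f" "B = W_rel V E \<sigma> f `` {b}"
    using B by (rule W_classE)
  \<comment> \<open>Working with representatives spares us proving that W_rel is transitive.\<close>
  show "(A, B) \<in> (domain_adj V E \<sigma> f)\<^sup>*"
  proof (cases "a = b")
    case False
    then obtain ys where "is_walk E ys" "hd ys = a" "last ys = b"
      using assms(3) a(1) b(1) unfolding graph_connected_def nonzero_set_def by blast
    moreover have "a \<in> domain_of V E \<sigma> f A" "b \<in> domain_of V E \<sigma> f B"
      using W_classI(2) a b subset_domain_of by (metis subsetD)+
    ultimately show ?thesis
      using domain_adj_rtrancl_along_walk[OF assms _ A B] by simp
  qed (simp add: a b)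
qed

end
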